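(* Let $\Sigma=\{a\}$ be a unary alphabet and let $L\subseteq\Sigma^*$ be a nonempty ideal language (i.e. $L=\Sigma^*L\Sigma^*$). Let $\ell$ be the minimum length of a word in $L$. Then $sc(L)=rc(L)=\ell+1$.
   Context: A DFA $\langle Q,\Sigma,\delta\rangle$ has a total transition function $\delta:Q\times\Sigma\to Q$ extended to words; it is synchronizing if some word $w$ satisfies $\delta(q,w)=\delta(q',w)$ for all $q,q'\in Q$, and $Syn(\mathscr{A})$ is the set of all such words. The state complexity $sc(L)$ of a regular language $L$ is the number of states of the minimal (complete) DFA recognizing $L$. The reset complexity $rc(L)$ of an ideal language $L$ is the minimal number of states of a synchronizing DFA $\mathscr{A}$ with $Syn(\mathscr{A})=L$. *)

theory Defs
  imports Main
begin

text \<open>Complete DFAs over an input alphabet Sg. States are drawn from nat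
  (every finite DFA is isomorphic to one with natural-number states).\<close>

definition dfa :: "nat set \<Rightarrow> 'a set \<Rightarrow> (nat \<Rightarrow> 'a \<Rightarrow> nat) \<Rightarrow> bool" where
  "dfa Q Sg delta \<longleftrightarrow> finite Q \<and> Q \<noteq> {} \<and> (\<forall>q\<in>Q. \<forall>x\<in>Sg. delta q x \<in> Q)"

definition delta_star :: "(nat \<Rightarrow> 'a \<Rightarrow> nat) \<Rightarrow> nat \<Rightarrow> 'a list \<Rightarrow> nat" where
  "delta_star delta q w = foldl delta q w"

definition dfa_lang :: "'a set \<Rightarrow> (nat \<Rightarrow> 'a \<Rightarrow> nat) \<Rightarrow> nat \<Rightarrow> nat set \<Rightarrow> 'a list set" where
  "dfa_lang Sg delta q0 F = {w \<in> lists Sg. delta_star delta q0 w \<in> F}"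

definition Syn :: "nat set \<Rightarrow> 'a set \<Rightarrow> (nat \<Rightarrow> 'a \<Rightarrow> nat) \<Rightarrow> 'a list set" where
  "Syn Q Sg delta = {w \<in> lists Sg. \<forall>q\<in>Q. \<forall>q'\<in>Q. delta_star delta q w = delta_star delta q' w}"

definition synchronizing :: "nat set \<Rightarrow> 'a set \<Rightarrow> (nat \<Rightarrow> 'a \<Rightarrow> nat) \<Rightarrow> bool" where
  "synchronizing Q Sg delta \<longleftrightarrow> Syn Q Sg delta \<noteq> {}"

definition sc :: "'a set \<Rightarrow> 'a list set \<Rightarrow> nat" where
  "sc Sg L = (LEAST n. \<exists>Q delta q0 F. dfa Q Sg delta \<and> q0 \<in> Q \<and> F \<subseteq> Q
                     \<and> dfa_lang Sg delta q0 F = L \<and> card Q = n)"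

definition rc :: "'a set \<Rightarrow> 'a list set \<Rightarrow> nat" where
  "rc Sg L = (LEAST n. \<exists>Q delta. dfa Q Sg delta \<and> synchronizing Q Sg delta
                     \<and> Syn Q Sg delta = L \<and> card Q = n)"

definition ideal_lang :: "'a set \<Rightarrow> 'a list set \<Rightarrow> bool" where
  "ideal_lang Sg L \<longleftrightarrow> L \<subseteq> lists Sg \<and>
     L = {u @ w @ v | u w v. u \<in> lists Sg \<and> w \<in> L \<and> v \<in> lists Sg}"

end

theory Submission
  imports Defs
begin

text \<open>By the ideal property, a unary ideal containing a shortest word \<open>a\<^sup>l\<close> contains every
  \<open>a\<^sup>n\<close> with \<open>n \<ge> l\<close>, so it is the language of all words of length at least \<open>l\<close>. This
  language is recognized, and is the set of reset words, of the counter automaton on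
  \<open>{0..l}\<close> that moves \<open>q\<close> to \<open>min (q + 1) l\<close>. Conversely, in a DFA recognizing it the
  states reached by \<open>a\<^sup>0, \<dots>, a\<^sup>l\<close> are pairwise distinguishable, and in a DFA synchronized
  exactly by it the images of the state set under \<open>a\<^sup>0, \<dots>, a\<^sup>l\<close> shrink strictly, since an
  image that stops shrinking stays fixed forever and would then have to be a singleton.\<close>

definition long_words :: "'a set \<Rightarrow> nat \<Rightarrow> 'a list set" where
  "long_words Sg l = {w \<in> lists Sg. l \<le> length w}"

definition counter :: "nat \<Rightarrow> nat \<Rightarrow> 'a \<Rightarrow> nat" where
  "counter l q x = min (Suc q) l"

lemma delta_star_append: "delta_star d q (u @ v) = delta_star d (delta_star d q u) v"
  by (simp add: delta_star_def)

lemma delta_star_replicate_Suc: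
  "delta_star d q (replicate (Suc n) a) = d (delta_star d q (replicate n a)) a"
  by (simp add: delta_star_def replicate_append_same[symmetric])

lemma delta_star_in_states:
  assumes "dfa Q Sg d" "q \<in> Q" "w \<in> lists Sg"
  shows "delta_star d q w \<in> Q"
  using assms(2,3)
proof (induction w arbitrary: q)
  case (Cons x w)
  then show ?case using assms(1) by (simp add: delta_star_def dfa_def)
qed (simp add: delta_star_def)

lemma in_lists_singleton_iff: "w \<in> lists {a} \<longleftrightarrow> w = replicate (length w) a"
  by (metis in_listsD in_listsI in_set_replicate replicate_length_same singletonD singletonI)

lemma replicate_in_long_words_iff: "a \<in> Sg \<Longrightarrow> replicate n a \<in> long_words Sg l \<longleftrightarrow> l \<le> n"
  by (auto simp: long_words_def)

lemma unary_ideal_eq_long_words: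
  assumes "L \<noteq> {}" "ideal_lang {a} L"
  shows "L = long_words {a} (LEAST n. \<exists>w\<in>L. length w = n)"
    (is "L = long_words {a} ?l")
proof -
  have L_unary: "L \<subseteq> lists {a}"
    using assms(2) unfolding ideal_lang_def by (rule conjunct1)
  have L_ideal: "L = {u @ v @ x | u v x. u \<in> lists {a} \<and> v \<in> L \<and> x \<in> lists {a}}"
    using assms(2) unfolding ideal_lang_def by (rule conjunct2)
  obtain w0 where w0: "w0 \<in> L" "length w0 = ?l"
    using assms(1) LeastI_ex[of "\<lambda>n. \<exists>w\<in>L. length w = n"] by blast
  have shortest: "?l \<le> length w" if "w \<in> L" for w
    using that by (blast intro: Least_le)
  have "w \<in> L" if "w \<in> lists {a}" "?l \<le> length w" for w
  proof -
    have "w0 = replicate ?l a"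
      using w0 L_unary in_lists_singleton_iff[of w0 a] by (metis subsetD)
    have "w = replicate (length w) a"
      using that(1) by (rule in_lists_singleton_iff[THEN iffD1])
    also have "\<dots> = replicate ?l a @ replicate (length w - ?l) a"
      using that(2) by (simp flip: replicate_add)
    also have "\<dots> = [] @ w0 @ replicate (length w - ?l) a"
      using \<open>w0 = replicate ?l a\<close> by simp
    finally have "w = [] @ w0 @ replicate (length w - ?l) a" .
    moreover have "[] \<in> lists {a}" "replicate (length w - ?l) a \<in> lists {a}"
      by auto
    ultimately have "w \<in> {u @ v @ x | u v x. u \<in> lists {a} \<and> v \<in> L \<and> x \<in> lists {a}}"
      using w0(1) by blast
    then show ?thesis
      \<comment> \<open>oriented right to left, since \<open>L\<close> recurs on the right-hand side of \<open>L_ideal\<close>\<close>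
      by (simp only: L_ideal[symmetric])
  qed
  then show ?thesis
    using L_unary shortest unfolding long_words_def by blast
qed

lemma delta_star_counter:
  "q \<le> l \<Longrightarrow> delta_star (counter l) q w = min (q + length w) l"
  by (induction w arbitrary: q) (simp_all add: delta_star_def counter_def)

lemma dfa_counter: "dfa {0..l} Sg (counter l)"
  by (auto simp: dfa_def counter_def)

lemma dfa_lang_counter: "dfa_lang Sg (counter l) 0 {l} = long_words Sg l"
  by (auto simp: dfa_lang_def long_words_def delta_star_counter)

lemma Syn_counter: "Syn {0..l} Sg (counter l) = long_words Sg l"
proof -
  have "(\<forall>q\<in>{0..l}. \<forall>q'\<in>{0..l}. min (q + n) l = min (q' + n) l) \<longleftrightarrow> l \<le> n" for n
  proof
    assume "\<forall>q\<in>{0..l}. \<forall>q'\<in>{0..l}. min (q + n) l = min (q' + n) l"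
    from this[rule_format, of 0 l] show "l \<le> n" by simp
  qed auto
  then show ?thesis
    by (simp add: Syn_def long_words_def delta_star_counter)
qed

lemma long_words_recognition_lower_bound:
  assumes "a \<in> Sg" "dfa Q Sg d" "q0 \<in> Q" "dfa_lang Sg d q0 F = long_words Sg l"
  shows "l + 1 \<le> card Q"
proof -
  define g where "g i = delta_star d q0 (replicate i a)" for i
  have g_in_Q: "g i \<in> Q" for i
    using assms(1-3) unfolding g_def by (auto intro: delta_star_in_states)
  have g_accepts: "delta_star d (g i) (replicate k a) \<in> F \<longleftrightarrow> l \<le> i + k" for i k
  proof -
    have "replicate (i + k) a \<in> lists Sg"
      using assms(1) by auto
    then have "delta_star d q0 (replicate (i + k) a) \<in> F \<longleftrightarrow> replicate (i + k) a \<in> long_words Sg l"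
      using assms(4) unfolding dfa_lang_def by blast
    then show ?thesis
      using replicate_in_long_words_iff[OF assms(1), of "i + k" l]
      by (simp add: g_def replicate_add[symmetric] delta_star_append[symmetric])
  qed
  have "g i \<noteq> g j" if "i < j" "j \<le> l" for i j
    \<comment> \<open>the suffix \<open>a\<^sup>l\<^sup>-\<^sup>j\<close> is accepted from \<open>g j\<close> but not from \<open>g i\<close>\<close>
    using that g_accepts[of i "l - j"] g_accepts[of j "l - j"] by auto
  then have "inj_on g {0..l}"
    by (metis atLeastAtMost_iff inj_onI linorder_neqE_nat)
  then have "card (g ` {0..l}) = l + 1"
    by (simp add: card_image)
  moreover have "card (g ` {0..l}) \<le> card Q"
    using assms(2) g_in_Q by (intro card_mono) (auto simp: dfa_def)
  ultimately show ?thesis by simp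
qed

lemma strictly_decreasing_length_bound:
  fixes f :: "nat \<Rightarrow> nat"
  assumes "\<And>i. i < l \<Longrightarrow> f (Suc i) < f i" "0 < f l"
  shows "l + 1 \<le> f 0"
proof -
  have "f i + i \<le> f 0" if "i \<le> l" for i
    using that
  proof (induction i)
    case (Suc i)
    then show ?case using assms(1)[of i] by simp
  qed simp
  from this[of l] show ?thesis
    using assms(2) by simp
qed

lemma long_words_reset_lower_bound:
  assumes "a \<in> Sg" "dfa Q Sg d" "Syn Q Sg d = long_words Sg l"
  shows "l + 1 \<le> card Q"
proof -
  define S where "S i = (\<lambda>q. delta_star d q (replicate i a)) ` Q" for i
  have S_Suc: "S (Suc i) = (\<lambda>q. d q a) ` S i" for i
    unfolding S_def delta_star_replicate_Suc by (simp add: image_image)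
  have S_subset: "S (Suc i) \<subseteq> S i" for i
  proof (induction i)
    case 0
    then show ?case
      using assms(1,2) by (auto simp: S_Suc S_def delta_star_def dfa_def)
  next
    case (Suc i)
    then show ?case by (simp add: S_Suc[of "Suc i"] S_Suc[of i] image_mono)
  qed
  have S_finite: "finite (S i)" for i
    using assms(2) by (simp add: S_def dfa_def)
  have S_nonempty: "S i \<noteq> {}" for i
    using assms(2) by (simp add: S_def dfa_def)
  have S_singleton_iff: "(\<forall>x\<in>S i. \<forall>y\<in>S i. x = y) \<longleftrightarrow> l \<le> i" for i
    using assms(1,3) replicate_in_long_words_iff[OF assms(1), of i l]
    by (auto simp: Syn_def S_def)
  have S_stable: "S (i + k) = S i" if "S (Suc i) = S i" for i k
    by (induction k) (use that S_Suc in simp_all)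
  have "card (S (Suc i)) < card (S i)" if "i < l" for i
  proof -
    have "S (Suc i) \<noteq> S i"
    proof
      assume "S (Suc i) = S i"
      then have "S l = S i"
        using S_stable[of i "l - i"] that by simp
      then show False
        using S_singleton_iff[of l] S_singleton_iff[of i] that by auto
    qed
    then show ?thesis
      using S_subset[of i] S_finite[of i] by (intro psubset_card_mono) auto
  qed
  moreover have "0 < card (S l)"
    using S_finite S_nonempty by (simp add: card_gt_0_iff)
  ultimately have "l + 1 \<le> card (S 0)"
    by (rule strictly_decreasing_length_bound)
  then show ?thesis
    by (simp add: S_def delta_star_def)
qed

lemma sc_long_words:
  assumes "a \<in> Sg"
  shows "sc Sg (long_words Sg l) = l + 1"
  unfolding sc_def
proof (rule Least_equality)
  show "\<exists>Q d q0 F. dfa Q Sg d \<and> q0 \<in> Q \<and> F \<subseteq> Q \<and> dfa_lang Sg d q0 F = long_words Sg l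
          \<and> card Q = l + 1"
    by (intro exI[of _ "{0..l}"] exI[of _ "counter l"] exI[of _ 0] exI[of _ "{l}"])
      (simp add: dfa_counter dfa_lang_counter)
next
  fix n
  assume "\<exists>Q d q0 F. dfa Q Sg d \<and> q0 \<in> Q \<and> F \<subseteq> Q \<and> dfa_lang Sg d q0 F = long_words Sg l
          \<and> card Q = n"
  then obtain Q d q0 F where "dfa Q Sg d" "q0 \<in> Q" "dfa_lang Sg d q0 F = long_words Sg l" "card Q = n"
    by blast
  then show "l + 1 \<le> n"
    using long_words_recognition_lower_bound[OF assms] by blast
qed

lemma rc_long_words:
  assumes "a \<in> Sg"
  shows "rc Sg (long_words Sg l) = l + 1"
  unfolding rc_def
proof (rule Least_equality)
  have "replicate l a \<in> Syn {0..l} Sg (counter l)"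
    using assms by (simp add: Syn_counter replicate_in_long_words_iff)
  then show "\<exists>Q d. dfa Q Sg d \<and> synchronizing Q Sg d \<and> Syn Q Sg d = long_words Sg l
          \<and> card Q = l + 1"
    unfolding synchronizing_def
    by (intro exI[of _ "{0..l}"] exI[of _ "counter l"]) (auto simp: dfa_counter Syn_counter)
next
  fix n
  assume "\<exists>Q d. dfa Q Sg d \<and> synchronizing Q Sg d \<and> Syn Q Sg d = long_words Sg l \<and> card Q = n"
  then obtain Q d where "dfa Q Sg d" "Syn Q Sg d = long_words Sg l" "card Q = n"
    by blast
  then show "l + 1 \<le> n"
    using long_words_reset_lower_bound[OF assms] by blast
qed

theorem proposition1:
  fixes a :: 'a and L :: "'a list set" and l :: nat
  assumes "L \<noteq> {}"
    and "ideal_lang {a} L"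
    and "l = (LEAST n. \<exists>w\<in>L. length w = n)"
  shows "sc {a} L = l + 1 \<and> rc {a} L = l + 1"
proof -
  have "L = long_words {a} l"
    using unary_ideal_eq_long_words[OF assms(1,2)] assms(3) by simp
  then show ?thesis
    using sc_long_words[of a "{a}" l] rc_long_words[of a "{a}" l] by simp
qed

end
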